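(* For any $k\geq1$, the maps $\Delta_\prec,\Delta_\succ$ endow $\mathbf{PM}_k^+$ with a codendriform coalgebra structure: for every $x\in\mathbf{PM}_k^+$, $\Delta(x)=\mathbf{F}_\emptyset\otimes x+\Delta_\prec(x)+\Delta_\succ(x)+x\otimes\mathbf{F}_\emptyset$, and, with $\bar\Delta=\Delta_\prec+\Delta_\succ$ and $I$ the identity, $(\Delta_\prec\otimes I)\circ\Delta_\prec=(I\otimes\bar\Delta)\circ\Delta_\prec$, $(\Delta_\succ\otimes I)\circ\Delta_\prec=(I\otimes\Delta_\prec)\circ\Delta_\succ$, $(\bar\Delta\otimes I)\circ\Delta_\succ=(I\otimes\Delta_\succ)\circ\Delta_\succ$ on $\mathbf{PM}_k^+$.
   Context: $A_k=\{0,\dots,k\}$. A $k$-packed matrix of size $n$ is an $n\times n$ matrix over $A_k$ with a nonzero entry in each row and column ($\emptyset$ of size 0). $\operatorname{cp}(N)$ deletes the null rows and null columns of $N$. A column decomposition $M=L\bullet R$ of a $k$-packed $M$ of size $n$ is a writing $M=[L\mid R]$ with $L$ the first $j$ columns and $R$ the last $n-j$ columns ($0\le j\le n$) such that $\operatorname{cp}(L),\operatorname{cp}(R)$ are square. $\mathbf{PM}_k$ is the vector space with basis $(\mathbf{F}_M)$ and coproduct $\Delta(\mathbf{F}_M)=\sum_{M=L\bullet R}\mathbf{F}_{\operatorname{cp}(L)}\otimes\mathbf{F}_{\operatorname{cp}(R)}$; $\mathbf{PM}_k^+$ is the span of $\mathbf{F}_M$, $M\neq\emptyset$. For nonempty $M$,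 $\Delta_\prec(\mathbf{F}_M)$ (resp. $\Delta_\succ(\mathbf{F}_M)$) is the sum of $\mathbf{F}_{\operatorname{cp}(L)}\otimes\mathbf{F}_{\operatorname{cp}(R)}$ over column decompositions $M=L\bullet R$ in which $L$ and $R$ each have at least one column and the nonzero entries of the last row of $M$ lie in $L$ (resp. in $R$); extended linearly. *)

theory Defs
  imports Main "HOL-Library.Poly_Mapping"
begin

text \<open>Matrices are lists of rows (entries in nat).
The empty list is the empty matrix of size 0.\<close>

type_synonym mat = "nat list list"

definition packed :: "nat \<Rightarrow> mat \<Rightarrow> bool" where
  "packed k M \<longleftrightarrow>
     (\<forall>r\<in>set M. length r = length M \<and> (\<forall>e\<in>set r. e \<le> k) \<and> (\<exists>e\<in>set r. e \<noteq> 0)) \<and>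
     (\<forall>j<length M. \<exists>i<length M. M ! i ! j \<noteq> 0)"

definition cp :: "mat \<Rightarrow> mat" where
  "cp N = map (\<lambda>r. nths r {j. \<exists>r'\<in>set N. j < length r' \<and> r' ! j \<noteq> 0})
              (filter (\<lambda>r. \<exists>e\<in>set r. e \<noteq> 0) N)"

definition is_square :: "mat \<Rightarrow> bool" where
  "is_square A \<longleftrightarrow> (\<forall>r\<in>set A. length r = length A)"

definition lpart :: "nat \<Rightarrow> mat \<Rightarrow> mat" where "lpart j M = map (take j) M"
definition rpart :: "nat \<Rightarrow> mat \<Rightarrow> mat" where "rpart j M = map (drop j) M"

definition col_dec :: "mat \<Rightarrow> nat \<Rightarrow> bool" where
  "col_dec M j \<longleftrightarrow> j \<le> length M \<and> is_square (cp (lpart j M)) \<and> is_square (cp (rpart j M))"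

text \<open>Formal linear combinations: finitely supported coefficient functions.\<close>
definition F :: "mat \<Rightarrow> (mat \<Rightarrow>\<^sub>0 'a::field)" where
  "F M = Poly_Mapping.single M 1"

definition F2 :: "mat \<Rightarrow> mat \<Rightarrow> (mat \<times> mat \<Rightarrow>\<^sub>0 'a::field)" where
  "F2 A B = Poly_Mapping.single (A, B) 1"

definition lext :: "('b \<Rightarrow> ('c \<Rightarrow>\<^sub>0 'a::field)) \<Rightarrow> ('b \<Rightarrow>\<^sub>0 'a) \<Rightarrow> ('c \<Rightarrow>\<^sub>0 'a)" where
  "lext f x = (\<Sum>m\<in>Poly_Mapping.keys x. Poly_Mapping.map (\<lambda>c. Poly_Mapping.lookup x m * c) (f m))"

definition tens :: "(mat \<Rightarrow>\<^sub>0 'a::field) \<Rightarrow> (mat \<Rightarrow>\<^sub>0 'a) \<Rightarrow> (mat \<times> mat \<Rightarrow>\<^sub>0 'a)" where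
  "tens u v = (\<Sum>a\<in>Poly_Mapping.keys u. \<Sum>b\<in>Poly_Mapping.keys v. Poly_Mapping.single (a, b) (Poly_Mapping.lookup u a * Poly_Mapping.lookup v b))"

definition Delta_b :: "mat \<Rightarrow> (mat \<times> mat \<Rightarrow>\<^sub>0 'a::field)" where
  "Delta_b M = (\<Sum>j\<in>{j. col_dec M j}. F2 (cp (lpart j M)) (cp (rpart j M)))"

definition Delta_prec_b :: "mat \<Rightarrow> (mat \<times> mat \<Rightarrow>\<^sub>0 'a::field)" where
  "Delta_prec_b M = (\<Sum>j\<in>{j. col_dec M j \<and> 1 \<le> j \<and> j < length M
        \<and> (\<forall>e\<in>set (drop j (last M)). e = 0)}. F2 (cp (lpart j M)) (cp (rpart j M)))"

definition Delta_succ_b :: "mat \<Rightarrow> (mat \<times> mat \<Rightarrow>\<^sub>0 'a::field)" where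
  "Delta_succ_b M = (\<Sum>j\<in>{j. col_dec M j \<and> 1 \<le> j \<and> j < length M
        \<and> (\<forall>e\<in>set (take j (last M)). e = 0)}. F2 (cp (lpart j M)) (cp (rpart j M)))"

definition Delta :: "(mat \<Rightarrow>\<^sub>0 'a::field) \<Rightarrow> (mat \<times> mat \<Rightarrow>\<^sub>0 'a)" where
  "Delta = lext Delta_b"
definition Delta_prec :: "(mat \<Rightarrow>\<^sub>0 'a::field) \<Rightarrow> (mat \<times> mat \<Rightarrow>\<^sub>0 'a)" where
  "Delta_prec = lext Delta_prec_b"
definition Delta_succ :: "(mat \<Rightarrow>\<^sub>0 'a::field) \<Rightarrow> (mat \<times> mat \<Rightarrow>\<^sub>0 'a)" where
  "Delta_succ = lext Delta_succ_b"
definition Delta_bar :: "(mat \<Rightarrow>\<^sub>0 'a::field) \<Rightarrow> (mat \<times> mat \<Rightarrow>\<^sub>0 'a)" where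
  "Delta_bar x = Delta_prec x + Delta_succ x"

definition tensor_I :: "((mat \<Rightarrow>\<^sub>0 'a::field) \<Rightarrow> (mat \<times> mat \<Rightarrow>\<^sub>0 'a))
    \<Rightarrow> (mat \<times> mat \<Rightarrow>\<^sub>0 'a) \<Rightarrow> (mat \<times> mat \<times> mat \<Rightarrow>\<^sub>0 'a)" where
  "tensor_I f = lext (\<lambda>(A, B). \<Sum>pq\<in>Poly_Mapping.keys (f (F A)).
       Poly_Mapping.single (fst pq, snd pq, B) (Poly_Mapping.lookup (f (F A)) pq))"

definition I_tensor :: "((mat \<Rightarrow>\<^sub>0 'a::field) \<Rightarrow> (mat \<times> mat \<Rightarrow>\<^sub>0 'a))
    \<Rightarrow> (mat \<times> mat \<Rightarrow>\<^sub>0 'a) \<Rightarrow> (mat \<times> mat \<times> mat \<Rightarrow>\<^sub>0 'a)" where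
  "I_tensor f = lext (\<lambda>(A, B). \<Sum>qr\<in>Poly_Mapping.keys (f (F B)).
       Poly_Mapping.single (A, fst qr, snd qr) (Poly_Mapping.lookup (f (F B)) qr))"

definition PMplus :: "nat \<Rightarrow> (mat \<Rightarrow>\<^sub>0 'a::field) set" where
  "PMplus k = {x. \<forall>M\<in>Poly_Mapping.keys x. packed k M \<and> M \<noteq> []}"

end

(*
  For a packed matrix M of size n, a column decomposition at j says exactly that the blocks of
  columns [0,j) and [j,n) of M, with their null rows deleted, are square; in particular no row
  of M has nonzero entries on both sides of a cut. Iterating the coproduct on either tensor
  factor therefore expands both sides of each codendriform identity into the same kind of sum,
  over pairs of cuts i < j for which all three blocks [0,i), [i,j), [j,n) are square. The
  identities then reduce to equivalences between conditions on where the nonzero entries of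
  the last row of M lie, and these are elementary statements about take and drop. All maps
  are linear extensions, so it suffices to check everything on basis elements.
*)

theory Submission
  imports Defs
begin

section \<open>Linear extension\<close>

lemma lookup_map_mult [simp]:
  "Poly_Mapping.lookup (Poly_Mapping.map (\<lambda>d. (c::'a::field) * d) p) m = c * Poly_Mapping.lookup p m"
  by (simp add: map.rep_eq when_def)

lemma map_one_mult [simp]: "Poly_Mapping.map (\<lambda>d. (1::'a::field) * d) p = p"
  by (rule poly_mapping_eqI) (simp add: map.rep_eq when_def)

lemma lookup_lext:
  "Poly_Mapping.lookup (lext g x) t
     = (\<Sum>m\<in>Poly_Mapping.keys x. Poly_Mapping.lookup x m * Poly_Mapping.lookup (g m) t)"
  unfolding lext_def by (simp add: lookup_sum)

lemma sum_keys_superset: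
  assumes "finite S" "Poly_Mapping.keys x \<subseteq> S"
  shows "(\<Sum>m\<in>Poly_Mapping.keys x. Poly_Mapping.lookup x m * (c m :: 'a::field))
       = (\<Sum>m\<in>S. Poly_Mapping.lookup x m * c m)"
  using assms by (intro sum.mono_neutral_left) (auto simp: in_keys_iff)

lemma lext_add: "lext g (u + v) = lext g u + lext g v"
proof (rule poly_mapping_eqI)
  fix t
  let ?S = "Poly_Mapping.keys u \<union> Poly_Mapping.keys v"
  have fin: "finite ?S" by simp
  have "Poly_Mapping.lookup (lext g (u + v)) t
      = (\<Sum>m\<in>?S. Poly_Mapping.lookup (u + v) m * Poly_Mapping.lookup (g m) t)"
    unfolding lookup_lext by (rule sum_keys_superset) (simp_all add: keys_add)
  also have "\<dots> = (\<Sum>m\<in>?S. Poly_Mapping.lookup u m * Poly_Mapping.lookup (g m) t)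
                  + (\<Sum>m\<in>?S. Poly_Mapping.lookup v m * Poly_Mapping.lookup (g m) t)"
    by (simp add: lookup_add distrib_right sum.distrib)
  also have "\<dots> = Poly_Mapping.lookup (lext g u) t + Poly_Mapping.lookup (lext g v) t"
    unfolding lookup_lext by (simp add: sum_keys_superset[OF fin])
  finally show "Poly_Mapping.lookup (lext g (u + v)) t = Poly_Mapping.lookup (lext g u + lext g v) t"
    by (simp add: lookup_add)
qed

lemma lext_sum: "lext g (\<Sum>j\<in>J. h j) = (\<Sum>j\<in>J. lext g (h j))"
proof (cases "finite J")
  case True
  then show ?thesis by (induction J rule: finite_induct) (simp_all add: lext_add, simp add: lext_def)
qed (simp add: lext_def)

lemma lext_single_one: "lext g (Poly_Mapping.single m (1::'a::field)) = g m"
  unfolding lext_def by simp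

lemma lext_F: "lext g (F m) = g m"
  unfolding F_def by (rule lext_single_one)

lemma lext_fun_add: "lext (\<lambda>m. g m + h m) x = lext g x + lext h x"
  by (rule poly_mapping_eqI) (simp add: lookup_lext lookup_add distrib_left sum.distrib)

lemma lext_cong: "(\<And>m. m \<in> Poly_Mapping.keys x \<Longrightarrow> g m = h m) \<Longrightarrow> lext g x = lext h x"
  unfolding lext_def by (rule sum.cong) auto

lemma lext_map_mult:
  "lext g (Poly_Mapping.map (\<lambda>d. c * d) p) = Poly_Mapping.map (\<lambda>d. c * d) (lext g p)"
proof (rule poly_mapping_eqI)
  fix t
  have "Poly_Mapping.keys (Poly_Mapping.map (\<lambda>d. c * d) p) \<subseteq> Poly_Mapping.keys p"
    by (auto simp: in_keys_iff)
  then have "Poly_Mapping.lookup (lext g (Poly_Mapping.map (\<lambda>d. c * d) p)) t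
      = (\<Sum>m\<in>Poly_Mapping.keys p. c * Poly_Mapping.lookup p m * Poly_Mapping.lookup (g m) t)"
    unfolding lookup_lext by (subst sum_keys_superset) simp_all
  then show "Poly_Mapping.lookup (lext g (Poly_Mapping.map (\<lambda>d. c * d) p)) t
      = Poly_Mapping.lookup (Poly_Mapping.map (\<lambda>d. c * d) (lext g p)) t"
    by (simp add: lookup_lext sum_distrib_left mult.assoc)
qed

lemma lext_lext: "lext g (lext h x) = lext (\<lambda>m. lext g (h m)) x"
  unfolding lext_def[of _ x] by (simp only: lext_sum lext_map_mult)

lemma sum_single_keys_eq_lext:
  "(\<Sum>m\<in>Poly_Mapping.keys v. Poly_Mapping.single (h m) (Poly_Mapping.lookup v m))
     = lext (\<lambda>m. Poly_Mapping.single (h m) (1::'a::field)) v"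
  unfolding lext_def by simp

lemma tensor_I_eq_lext:
  "tensor_I f = lext (\<lambda>(A, B). lext (\<lambda>pq. Poly_Mapping.single (fst pq, snd pq, B) 1) (f (F A)))"
  unfolding tensor_I_def sum_single_keys_eq_lext ..

lemma I_tensor_eq_lext:
  "I_tensor f = lext (\<lambda>(A, B). lext (\<lambda>qr. Poly_Mapping.single (A, fst qr, snd qr) 1) (f (F B)))"
  unfolding I_tensor_def sum_single_keys_eq_lext ..

lemma tensor_I_sum: "tensor_I f (\<Sum>j\<in>J. h j) = (\<Sum>j\<in>J. tensor_I f (h j))"
  unfolding tensor_I_eq_lext by (rule lext_sum)

lemma I_tensor_sum: "I_tensor f (\<Sum>j\<in>J. h j) = (\<Sum>j\<in>J. I_tensor f (h j))"
  unfolding I_tensor_eq_lext by (rule lext_sum)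

lemma tensor_I_F2:
  "tensor_I f (F2 A B) = lext (\<lambda>pq. Poly_Mapping.single (fst pq, snd pq, B) 1) (f (F A))"
  unfolding tensor_I_eq_lext F2_def lext_single_one by simp

lemma I_tensor_F2:
  "I_tensor f (F2 A B) = lext (\<lambda>qr. Poly_Mapping.single (A, fst qr, snd qr) 1) (f (F B))"
  unfolding I_tensor_eq_lext F2_def lext_single_one by simp

lemma tensor_I_lext_eq_I_tensor_lext:
  assumes "\<And>M. M \<in> Poly_Mapping.keys x \<Longrightarrow> tensor_I f (g M) = I_tensor f' (h M)"
  shows "tensor_I f (lext g x) = I_tensor f' (lext h x)"
  unfolding tensor_I_eq_lext I_tensor_eq_lext lext_lext
  using assms by (intro lext_cong) (simp add: tensor_I_eq_lext I_tensor_eq_lext)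

lemma tens_F_Nil_left: "tens (F []) x = lext (\<lambda>M. F2 [] M) (x :: mat \<Rightarrow>\<^sub>0 'a::field)"
  by (simp add: tens_def F_def F2_def sum_single_keys_eq_lext)

lemma tens_F_Nil_right: "tens x (F []) = lext (\<lambda>M. F2 M []) (x :: mat \<Rightarrow>\<^sub>0 'a::field)"
  by (simp add: tens_def F_def F2_def sum_single_keys_eq_lext)

section \<open>Blocks of a packed matrix\<close>

definition nonnull :: "nat list \<Rightarrow> bool" where
  "nonnull r \<longleftrightarrow> (\<exists>e\<in>set r. e \<noteq> 0)"

definition cols :: "nat \<Rightarrow> nat \<Rightarrow> nat list \<Rightarrow> nat list" where
  "cols a b r = take (b - a) (drop a r)"

definition block :: "nat \<Rightarrow> nat \<Rightarrow> mat \<Rightarrow> mat" where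
  "block a b M = filter nonnull (map (cols a b) M)"

definition square_block :: "nat \<Rightarrow> nat \<Rightarrow> mat \<Rightarrow> bool" where
  "square_block a b M \<longleftrightarrow> length (block a b M) = b - a"

lemma nonnull_append [simp]: "nonnull (xs @ ys) \<longleftrightarrow> nonnull xs \<or> nonnull ys"
  by (auto simp: nonnull_def)

lemma cols_self [simp]: "cols a a = (\<lambda>_. [])"
  by (simp add: cols_def fun_eq_iff)

lemma nonnull_Nil [simp]: "\<not> nonnull []"
  by (simp add: nonnull_def)

lemma length_cols: "b \<le> length r \<Longrightarrow> length (cols a b r) = b - a"
  by (simp add: cols_def)

lemma nth_cols: "a + c < b \<Longrightarrow> b \<le> length r \<Longrightarrow> cols a b r ! c = r ! (a + c)"
  by (simp add: cols_def)

lemma cols_cols: "b \<le> d - c \<Longrightarrow> cols a b (cols c d r) = cols (c + a) (c + b) r"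
  by (simp add: cols_def drop_take min_def add.commute)

lemma set_cols: "set (cols a b r) \<subseteq> set r"
  unfolding cols_def by (meson order_trans set_drop_subset set_take_subset)

lemma nonnull_cols_imp_nonnull: "nonnull (cols a b r) \<Longrightarrow> nonnull r"
  using set_cols unfolding nonnull_def by blast

lemma cols_append: "a \<le> b \<Longrightarrow> b \<le> c \<Longrightarrow> cols a c r = cols a b r @ cols b c r"
proof -
  assume "a \<le> b" "b \<le> c"
  then have "cols a c r = take ((b - a) + (c - b)) (drop a r)" by (simp add: cols_def)
  also have "\<dots> = cols a b r @ cols b c r"
    unfolding take_add cols_def drop_drop using \<open>a \<le> b\<close> by simp
  finally show ?thesis .
qed

lemma cols_0 [simp]: "cols 0 j = take j"
  by (simp add: cols_def fun_eq_iff)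

lemma cols_end: "length r = n \<Longrightarrow> cols j n r = drop j r"
  by (simp add: cols_def)

lemma length_block: "length (block a b M) = length (filter (\<lambda>r. nonnull (cols a b r)) M)"
  by (simp add: block_def comp_def)

lemma packed_iff:
  "packed k M \<longleftrightarrow>
     (\<forall>r\<in>set M. length r = length M \<and> (\<forall>e\<in>set r. e \<le> k) \<and> nonnull r) \<and>
     (\<forall>j<length M. \<exists>r\<in>set M. r ! j \<noteq> 0)"
proof -
  have "\<And>j. (\<exists>i<length M. M ! i ! j \<noteq> 0) \<longleftrightarrow> (\<exists>r\<in>set M. r ! j \<noteq> 0)"
    by (metis in_set_conv_nth)
  then show ?thesis by (simp add: packed_def nonnull_def)
qed

lemma packed_column_witness:
  assumes "packed k N" "a + c < b" "b \<le> length N"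
  obtains r where "r \<in> set N" "nonnull (cols a b r)" "cols a b r ! c \<noteq> 0"
proof -
  obtain r where r: "r \<in> set N" "r ! (a + c) \<noteq> 0"
    using assms unfolding packed_iff by (meson order_less_le_trans)
  have "length r = length N" using assms(1) r(1) by (simp add: packed_iff)
  then have "cols a b r ! c = r ! (a + c)" "c < length (cols a b r)"
    using assms by (simp_all add: nth_cols length_cols)
  then show ?thesis using that r unfolding nonnull_def by (metis nth_mem)
qed

lemma cp_eq_filter_nonnull:
  assumes "\<forall>r\<in>set X. length r = w" "\<forall>c<w. \<exists>r\<in>set X. r ! c \<noteq> 0"
  shows "cp X = filter nonnull X"
proof -
  have "\<And>r. r \<in> set X \<Longrightarrow> nths r {j. \<exists>r'\<in>set X. j < length r' \<and> r' ! j \<noteq> 0} = r"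
    using assms by (intro nths_all) fastforce
  then show ?thesis unfolding cp_def nonnull_def[symmetric] by (intro map_idI) auto
qed

lemma cp_map_cols:
  assumes "packed k N" "b \<le> length N"
  shows "cp (map (cols a b) N) = block a b N"
  unfolding block_def
proof (rule cp_eq_filter_nonnull[where w = "b - a"])
  show "\<forall>r\<in>set (map (cols a b) N). length r = b - a"
    using assms by (auto simp: packed_iff length_cols)
  show "\<forall>c<b - a. \<exists>r\<in>set (map (cols a b) N). r ! c \<noteq> 0"
    using packed_column_witness[OF assms(1) _ assms(2)] by (metis image_eqI less_diff_conv set_map add.commute)
qed

lemma cp_lpart_eq_block: "packed k N \<Longrightarrow> j \<le> length N \<Longrightarrow> cp (lpart j N) = block 0 j N"
  using cp_map_cols[of k N j 0] by (simp add: lpart_def)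

lemma cp_rpart_eq_block:
  assumes "packed k N" "j \<le> length N"
  shows "cp (rpart j N) = block j (length N) N"
proof -
  have "rpart j N = map (cols j (length N)) N"
    using assms(1) by (auto simp: rpart_def packed_iff cols_end)
  then show ?thesis using cp_map_cols[OF assms(1), of "length N" j] by simp
qed

lemma block_block: "b \<le> d - c \<Longrightarrow> block a b (block c d N) = block (c + a) (c + b) N"
proof -
  assume "b \<le> d - c"
  then have "nonnull (cols (c + a) (c + b) r) \<Longrightarrow> nonnull (cols c d r)" for r
    by (metis cols_cols nonnull_cols_imp_nonnull)
  then show ?thesis
    using \<open>b \<le> d - c\<close> by (induction N) (auto simp: block_def cols_cols)
qed

lemma square_block_block:
  "b \<le> d - c \<Longrightarrow> square_block a b (block c d N) \<longleftrightarrow> square_block (c + a) (c + b) N"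
  by (simp add: square_block_def block_block)

lemma block_full: "packed k N \<Longrightarrow> block 0 (length N) N = N"
  unfolding block_def by (auto simp: packed_iff intro!: filter_True map_idI)

lemma square_block_full: "packed k N \<Longrightarrow> square_block 0 (length N) N"
  by (simp add: square_block_def block_full)

lemma length_block_split:
  assumes "a \<le> b" "b \<le> c"
  shows "length (block a b N) + length (block b c N)
       = length (block a c N) + length (filter (\<lambda>r. nonnull (cols a b r) \<and> nonnull (cols b c r)) N)"
proof -
  have "\<And>P Q xs. length (filter P xs) + length (filter Q xs)
      = length (filter (\<lambda>x. P x \<or> Q x) xs) + length (filter (\<lambda>x. P x \<and> Q x) xs)"
    subgoal for P Q xs by (induction xs) auto
    done
  then show ?thesis unfolding length_block by (simp add: cols_append[OF assms])
qed

lemma block_nonempty: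
  assumes "packed k N" "a < b" "b \<le> length N"
  shows "block a b N \<noteq> []"
  using packed_column_witness[OF assms(1) _ assms(3), of a 0] assms(2)
  by (auto simp: block_def filter_empty_conv)

lemma length_row_block: "packed k N \<Longrightarrow> b \<le> length N \<Longrightarrow> r \<in> set (block a b N) \<Longrightarrow> length r = b - a"
  by (auto simp: block_def packed_iff length_cols)

lemma is_square_block_iff:
  assumes "packed k N" "a \<le> b" "b \<le> length N"
  shows "is_square (block a b N) \<longleftrightarrow> square_block a b N"
proof (cases "a = b")
  case True
  then show ?thesis by (simp add: is_square_def square_block_def block_def cols_def nonnull_def)
next
  case False
  then have "block a b N \<noteq> []" using block_nonempty assms by simp
  then show ?thesis using length_row_block[OF assms(1,3)] unfolding is_square_def square_block_def
    by (metis last_in_set)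
qed

lemma col_dec_iff_square_blocks:
  assumes "packed k N"
  shows "col_dec N j \<longleftrightarrow> j \<le> length N \<and> square_block 0 j N \<and> square_block j (length N) N"
  using assms by (auto simp: col_dec_def cp_lpart_eq_block cp_rpart_eq_block is_square_block_iff)

lemma packed_block:
  assumes "packed k N" "b \<le> length N" "square_block a b N"
  shows "packed k (block a b N)"
proof -
  have "length r = length (block a b N) \<and> (\<forall>e\<in>set r. e \<le> k) \<and> nonnull r"
    if r: "r \<in> set (block a b N)" for r
  proof -
    obtain r0 where r0: "r0 \<in> set N" "r = cols a b r0" "nonnull r"
      using r by (auto simp: block_def)
    then have "set r \<subseteq> set r0" using set_cols by simp
    then show ?thesis using assms r0 length_row_block[OF assms(1,2) r]
      unfolding packed_iff square_block_def by fastforce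
  qed
  moreover have "\<exists>r\<in>set (block a b N). r ! c \<noteq> 0" if "c < length (block a b N)" for c
  proof -
    have "a + c < b" using that assms(3) by (simp add: square_block_def)
    then obtain r where "r \<in> set N" "nonnull (cols a b r)" "cols a b r ! c \<noteq> 0"
      using packed_column_witness[OF assms(1) _ assms(2)] by blast
    then show ?thesis by (auto simp: block_def)
  qed
  ultimately show ?thesis unfolding packed_iff by blast
qed

text \<open>By length_block_split the number of rows of a block is subadditive under merging, while
  the blocks [0,j) and [j,n) together have at least n rows; this pins down both merged blocks.\<close>

lemma square_block_compose:
  assumes "packed k M" "i \<le> j" "j \<le> length M"
    and "square_block 0 i M" "square_block i j M" "square_block j (length M) M"
  shows "square_block 0 j M" "square_block i (length M) M"
proof -
  have "length (block 0 (length M) M) = length M" using block_full[OF assms(1)] by simp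
  moreover note
    length_block_split[of 0 i j M] length_block_split[of 0 j "length M" M]
    length_block_split[of i j "length M" M] length_block_split[of 0 i "length M" M]
  ultimately show "square_block 0 j M" "square_block i (length M) M"
    using assms unfolding square_block_def by linarith+
qed

lemma no_row_straddles_cut:
  assumes "packed k N" "col_dec N j" "r \<in> set N"
  shows "\<not> (nonnull (take j r) \<and> nonnull (drop j r))"
proof -
  have "square_block 0 j N" "square_block j (length N) N" "j \<le> length N"
    using assms(1,2) by (simp_all add: col_dec_iff_square_blocks)
  then have "length (filter (\<lambda>r. nonnull (cols 0 j r) \<and> nonnull (cols j (length N) r)) N) = 0"
    using length_block_split[of 0 j "length N" N] block_full[OF assms(1)]
    by (simp add: square_block_def)
  moreover have "length r = length N" using assms by (simp add: packed_iff)
  ultimately show ?thesis using assms(3) by (auto simp: filter_empty_conv cols_end)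
qed

lemma last_block:
  assumes "N \<noteq> []" "nonnull (cols a b (last N))"
  shows "last (block a b N) = cols a b (last N)"
proof -
  obtain ys y where "N = ys @ [y]" using assms(1) by (metis rev_exhaust)
  then show ?thesis using assms by (simp add: block_def)
qed

section \<open>Iterated decompositions\<close>

text \<open>Delta_prec_b, Delta_succ_b and their sum are the instances P = zeros_after, zeros_before
  and True.\<close>

definition Delta_when :: "(nat \<Rightarrow> nat list \<Rightarrow> bool) \<Rightarrow> mat \<Rightarrow> (mat \<times> mat \<Rightarrow>\<^sub>0 'a::field)" where
  "Delta_when P M = (\<Sum>j\<in>{j. col_dec M j \<and> 1 \<le> j \<and> j < length M \<and> P j (last M)}.
      F2 (cp (lpart j M)) (cp (rpart j M)))"

lemma Delta_when_eq_blocks: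
  assumes "packed k M"
  shows "Delta_when P M = (\<Sum>j\<in>{j. 1 \<le> j \<and> j < length M \<and> square_block 0 j M
      \<and> square_block j (length M) M \<and> P j (last M)}. F2 (block 0 j M) (block j (length M) M))"
  unfolding Delta_when_def using assms
  by (intro sum.cong) (auto simp: col_dec_iff_square_blocks cp_lpart_eq_block cp_rpart_eq_block)

lemma Delta_when_left_block:
  assumes "packed k M" "j \<le> length M" "square_block 0 j M"
  shows "Delta_when P (block 0 j M) = (\<Sum>i\<in>{i. 1 \<le> i \<and> i < j \<and> square_block 0 i M
      \<and> square_block i j M \<and> P i (last (block 0 j M))}. F2 (block 0 i M) (block i j M))"
proof -
  have "length (block 0 j M) = j" using assms(3) by (simp add: square_block_def)
  then show ?thesis
    unfolding Delta_when_eq_blocks[OF packed_block[OF assms]]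
    by (intro sum.cong) (auto simp: block_block square_block_block)
qed

lemma Delta_when_right_block:
  assumes "packed k M" "i \<le> length M" "square_block i (length M) M"
  shows "Delta_when P (block i (length M) M) = (\<Sum>j\<in>{j. i < j \<and> j < length M \<and> square_block i j M
      \<and> square_block j (length M) M \<and> P (j - i) (last (block i (length M) M))}.
      F2 (block i j M) (block j (length M) M))"
proof -
  let ?n = "length M"
  have len: "length (block i ?n M) = ?n - i" and n: "i + (?n - i) = ?n"
    using assms by (simp_all add: square_block_def)
  show ?thesis
    unfolding Delta_when_eq_blocks[OF packed_block[OF assms(1) order.refl assms(3)]] len
    by (rule sum.reindex_bij_witness[where i = "\<lambda>j. j - i" and j = "\<lambda>j'. i + j'"])
       (auto simp: block_block square_block_block n)
qed

definition double_cuts :: "mat \<Rightarrow> (nat \<times> nat) set" where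
  "double_cuts M = {(i, j). 1 \<le> i \<and> i < j \<and> j < length M
      \<and> square_block 0 i M \<and> square_block i j M \<and> square_block j (length M) M}"

definition F3 :: "mat \<Rightarrow> nat \<times> nat \<Rightarrow> (mat \<times> mat \<times> mat \<Rightarrow>\<^sub>0 'a::field)" where
  "F3 M p = Poly_Mapping.single (block 0 (fst p) M, block (fst p) (snd p) M, block (snd p) (length M) M) 1"

lemma tensor_I_Delta_when:
  fixes f :: "(mat \<Rightarrow>\<^sub>0 'a::field) \<Rightarrow> (mat \<times> mat \<Rightarrow>\<^sub>0 'a)"
  assumes M: "packed k M"
    and f: "\<And>A. packed k A \<Longrightarrow> A \<noteq> [] \<Longrightarrow> f (F A) = Delta_when P A"
  shows "tensor_I f (Delta_when Q M) = (\<Sum>p\<in>{(i, j). (i, j) \<in> double_cuts M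
      \<and> Q j (last M) \<and> P i (last (block 0 j M))}. F3 M p)"
proof -
  define J where "J = {j. 1 \<le> j \<and> j < length M \<and> square_block 0 j M
      \<and> square_block j (length M) M \<and> Q j (last M)}"
  define I where "I j = {i. 1 \<le> i \<and> i < j \<and> square_block 0 i M \<and> square_block i j M
      \<and> P i (last (block 0 j M))}" for j
  have fin: "finite J" "finite (I j)" for j
    by (rule finite_subset[of _ "{..<length M}"], auto simp: J_def)
       (rule finite_subset[of _ "{..<j}"], auto simp: I_def)
  have inner: "tensor_I f (F2 (block 0 j M) (block j (length M) M)) = (\<Sum>i\<in>I j. F3 M (i, j))"
    if "j \<in> J" for j
  proof -
    have "block 0 j M \<noteq> []" "packed k (block 0 j M)"
      using that M block_nonempty[OF M] packed_block[OF M] by (auto simp: J_def)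
    then have "tensor_I f (F2 (block 0 j M) (block j (length M) M))
        = lext (\<lambda>pq. Poly_Mapping.single (fst pq, snd pq, block j (length M) M) 1) (Delta_when P (block 0 j M))"
      by (simp add: tensor_I_F2 f)
    then show ?thesis using that
      by (simp add: Delta_when_left_block[OF M] J_def I_def lext_sum F2_def F3_def lext_single_one)
  qed
  have "tensor_I f (Delta_when Q M) = (\<Sum>j\<in>J. \<Sum>i\<in>I j. F3 M (i, j))"
    unfolding Delta_when_eq_blocks[OF M] tensor_I_sum J_def[symmetric]
    using inner by simp
  also have "\<dots> = (\<Sum>p\<in>(\<lambda>(j, i). (i, j)) ` Sigma J I. F3 M p)"
    by (simp add: sum.Sigma fin sum.reindex inj_on_def case_prod_beta)
  also have "(\<lambda>(j, i). (i, j)) ` Sigma J I = {(i, j). (i, j) \<in> double_cuts M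
      \<and> Q j (last M) \<and> P i (last (block 0 j M))}"
    using square_block_compose(1)[OF M less_imp_le less_imp_le]
    by (auto simp: J_def I_def double_cuts_def image_iff)
  finally show ?thesis .
qed

lemma I_tensor_Delta_when:
  fixes f :: "(mat \<Rightarrow>\<^sub>0 'a::field) \<Rightarrow> (mat \<times> mat \<Rightarrow>\<^sub>0 'a)"
  assumes M: "packed k M"
    and f: "\<And>A. packed k A \<Longrightarrow> A \<noteq> [] \<Longrightarrow> f (F A) = Delta_when P A"
  shows "I_tensor f (Delta_when Q M) = (\<Sum>p\<in>{(i, j). (i, j) \<in> double_cuts M
      \<and> Q i (last M) \<and> P (j - i) (last (block i (length M) M))}. F3 M p)"
proof -
  define I where "I = {i. 1 \<le> i \<and> i < length M \<and> square_block 0 i M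
      \<and> square_block i (length M) M \<and> Q i (last M)}"
  define J where "J i = {j. i < j \<and> j < length M \<and> square_block i j M \<and> square_block j (length M) M
      \<and> P (j - i) (last (block i (length M) M))}" for i
  have fin: "finite I" "finite (J i)" for i
    by (rule finite_subset[of _ "{..<length M}"], auto simp: I_def)
       (rule finite_subset[of _ "{..<length M}"], auto simp: J_def)
  have inner: "I_tensor f (F2 (block 0 i M) (block i (length M) M)) = (\<Sum>j\<in>J i. F3 M (i, j))"
    if "i \<in> I" for i
  proof -
    have "block i (length M) M \<noteq> []" "packed k (block i (length M) M)"
      using that M block_nonempty[OF M] packed_block[OF M] by (auto simp: I_def)
    then have "I_tensor f (F2 (block 0 i M) (block i (length M) M))
        = lext (\<lambda>qr. Poly_Mapping.single (block 0 i M, fst qr, snd qr) 1) (Delta_when P (block i (length M) M))"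
      by (simp add: I_tensor_F2 f)
    then show ?thesis using that
      by (simp add: Delta_when_right_block[OF M] I_def J_def lext_sum F2_def F3_def lext_single_one)
  qed
  have "I_tensor f (Delta_when Q M) = (\<Sum>i\<in>I. \<Sum>j\<in>J i. F3 M (i, j))"
    unfolding Delta_when_eq_blocks[OF M] I_tensor_sum I_def[symmetric]
    using inner by simp
  also have "\<dots> = (\<Sum>p\<in>Sigma I J. F3 M p)"
    by (simp add: sum.Sigma fin)
  also have "Sigma I J = {(i, j). (i, j) \<in> double_cuts M
      \<and> Q i (last M) \<and> P (j - i) (last (block i (length M) M))}"
    using square_block_compose(2)[OF M less_imp_le less_imp_le]
    by (auto simp: I_def J_def double_cuts_def)
  finally show ?thesis .
qed

section \<open>Position of the last row\<close>

definition zeros_after :: "nat \<Rightarrow> nat list \<Rightarrow> bool" where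
  "zeros_after j r \<longleftrightarrow> (\<forall>e\<in>set (drop j r). e = 0)"

definition zeros_before :: "nat \<Rightarrow> nat list \<Rightarrow> bool" where
  "zeros_before j r \<longleftrightarrow> (\<forall>e\<in>set (take j r). e = 0)"

lemma zeros_after_iff: "zeros_after j r \<longleftrightarrow> \<not> nonnull (drop j r)"
  by (auto simp: zeros_after_def nonnull_def)

lemma zeros_before_iff: "zeros_before j r \<longleftrightarrow> \<not> nonnull (take j r)"
  by (auto simp: zeros_before_def nonnull_def)

lemma zeros_after_take:
  assumes "i \<le> j"
  shows "zeros_after i r \<longleftrightarrow> zeros_after j r \<and> zeros_after i (take j r)"
proof -
  have "drop i r = drop i (take j r) @ drop j r"
    using assms by (metis append_take_drop_id drop_drop drop_take le_add_diff_inverse2)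
  then show ?thesis by (auto simp: zeros_after_def)
qed

lemma zeros_before_take: "i \<le> j \<Longrightarrow> zeros_before i (take j r) \<longleftrightarrow> zeros_before i r"
  by (simp add: zeros_before_def min_def)

lemma zeros_after_drop: "i \<le> j \<Longrightarrow> zeros_after (j - i) (drop i r) \<longleftrightarrow> zeros_after j r"
  by (simp add: zeros_after_def)

lemma zeros_before_split:
  "i \<le> j \<Longrightarrow> zeros_before j r \<longleftrightarrow> zeros_before i r \<and> zeros_before (j - i) (drop i r)"
  unfolding zeros_before_def by (metis le_add_diff_inverse take_add set_append Un_iff)

lemma zeros_after_iff_not_zeros_before:
  assumes "packed k N" "col_dec N j" "r \<in> set N"
  shows "zeros_after j r \<longleftrightarrow> \<not> zeros_before j r"
proof -
  have "nonnull (take j r @ drop j r)" using assms(1,3) by (simp add: packed_iff)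
  then show ?thesis using no_row_straddles_cut[OF assms]
    unfolding zeros_after_iff zeros_before_iff nonnull_append by blast
qed

lemma last_row_packed:
  assumes "packed k M" "M \<noteq> []"
  shows "nonnull (last M)" "length (last M) = length M"
  using assms last_in_set[OF assms(2)] unfolding packed_iff by blast+

lemma last_block_left:
  assumes "packed k M" "M \<noteq> []" "zeros_after j (last M)"
  shows "last (block 0 j M) = take j (last M)"
proof -
  have "nonnull (take j (last M))"
    using last_row_packed(1)[OF assms(1,2)] assms(3)
    by (metis append_take_drop_id nonnull_append zeros_after_iff)
  then show ?thesis using last_block[OF assms(2), of 0 j] by simp
qed

lemma last_block_right:
  assumes "packed k M" "M \<noteq> []" "zeros_before i (last M)"
  shows "last (block i (length M) M) = drop i (last M)"
proof -
  have "nonnull (drop i (last M))"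
    using last_row_packed(1)[OF assms(1,2)] assms(3)
    by (metis append_take_drop_id nonnull_append zeros_before_iff)
  then show ?thesis using last_block[OF assms(2), of i "length M"] last_row_packed(2)[OF assms(1,2)]
    by (simp add: cols_end)
qed

lemma prec_prec_last_row:
  assumes "packed k M" "M \<noteq> []" "i < j"
  shows "zeros_after j (last M) \<and> zeros_after i (last (block 0 j M)) \<longleftrightarrow> zeros_after i (last M)"
  using last_block_left[OF assms(1,2)] zeros_after_take[of i j "last M"] assms(3) by auto

lemma succ_prec_last_row:
  assumes "packed k M" "M \<noteq> []" "i < j"
  shows "zeros_after j (last M) \<and> zeros_before i (last (block 0 j M))
     \<longleftrightarrow> zeros_before i (last M) \<and> zeros_after (j - i) (last (block i (length M) M))"
  using last_block_left[OF assms(1,2)] last_block_right[OF assms(1,2)]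
    zeros_before_take[of i j "last M"] zeros_after_drop[of i j "last M"] assms(3) by auto

lemma succ_succ_last_row:
  assumes "packed k M" "M \<noteq> []" "i < j"
  shows "zeros_before j (last M)
     \<longleftrightarrow> zeros_before i (last M) \<and> zeros_before (j - i) (last (block i (length M) M))"
  using last_block_right[OF assms(1,2)] zeros_before_split[of i j "last M"] assms(3) by auto

section \<open>The half-coproducts\<close>

lemma Delta_prec_b_eq: "Delta_prec_b = Delta_when zeros_after"
  by (simp add: fun_eq_iff Delta_prec_b_def Delta_when_def zeros_after_def)

lemma Delta_succ_b_eq: "Delta_succ_b = Delta_when zeros_before"
  by (simp add: fun_eq_iff Delta_succ_b_def Delta_when_def zeros_before_def)

lemma Delta_prec_apply: "Delta_prec x = lext Delta_prec_b x"
  by (simp add: Delta_prec_def)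

lemma Delta_succ_apply: "Delta_succ x = lext Delta_succ_b x"
  by (simp add: Delta_succ_def)

lemma Delta_prec_F: "Delta_prec (F A) = Delta_when zeros_after A"
  by (simp add: Delta_prec_def lext_F Delta_prec_b_eq)

lemma Delta_succ_F: "Delta_succ (F A) = Delta_when zeros_before A"
  by (simp add: Delta_succ_def lext_F Delta_succ_b_eq)

lemma Delta_when_split:
  assumes "packed k N"
  shows "Delta_when zeros_after N + Delta_when zeros_before N = Delta_when (\<lambda>_ _. True) N"
proof -
  let ?C = "\<lambda>P. {j. col_dec N j \<and> 1 \<le> j \<and> j < length N \<and> P j (last N)}"
  have fin: "finite (?C P)" for P by (rule finite_subset[of _ "{..<length N}"]) auto
  have "zeros_after j (last N) \<longleftrightarrow> \<not> zeros_before j (last N)" if "j < length N" "col_dec N j" for j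
  proof -
    have "N \<noteq> []" using that(1) by auto
    then show ?thesis using zeros_after_iff_not_zeros_before[OF assms that(2) last_in_set] by blast
  qed
  then have disj: "?C zeros_after \<inter> ?C zeros_before = {}"
    and union: "?C zeros_after \<union> ?C zeros_before = ?C (\<lambda>_ _. True)"
    by blast+
  show ?thesis
    unfolding Delta_when_def union[symmetric]
    by (rule sum.union_disjoint[OF fin[of zeros_after] fin[of zeros_before] disj, symmetric])
qed

lemma Delta_bar_F: "packed k A \<Longrightarrow> A \<noteq> [] \<Longrightarrow> Delta_bar (F A) = Delta_when (\<lambda>_ _. True) A"
  by (simp add: Delta_bar_def Delta_prec_F Delta_succ_F Delta_when_split)

lemma Delta_b_split:
  assumes "packed k M" "M \<noteq> []"
  shows "Delta_b M = F2 [] M + Delta_prec_b M + Delta_succ_b M + F2 M []"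
proof -
  let ?n = "length M"
  let ?g = "\<lambda>j. F2 (cp (lpart j M)) (cp (rpart j M))"
  let ?J = "{j. col_dec M j \<and> 1 \<le> j \<and> j < ?n \<and> True}"
  have fin: "finite ?J" by (rule finite_subset[of _ "{..<?n}"]) auto
  have "{j. col_dec M j} = insert 0 (insert ?n ?J)"
    using assms square_block_full[OF assms(1)]
    by (auto simp: col_dec_iff_square_blocks square_block_def block_def)
  then have "Delta_b M = ?g 0 + (?g ?n + sum ?g ?J)"
    using assms fin unfolding Delta_b_def by (simp add: sum.insert)
  also have "?g 0 = F2 [] M"
    using cp_lpart_eq_block[OF assms(1)] cp_rpart_eq_block[OF assms(1)] block_full[OF assms(1)]
    by (simp add: block_def comp_def)
  also have "?g ?n = F2 M []"
    using cp_lpart_eq_block[OF assms(1)] cp_rpart_eq_block[OF assms(1)] block_full[OF assms(1)]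
    by (simp add: block_def comp_def)
  also have "sum ?g ?J = Delta_prec_b M + Delta_succ_b M"
    by (simp add: Delta_prec_b_eq Delta_succ_b_eq Delta_when_split[OF assms(1)]) (simp add: Delta_when_def)
  finally show ?thesis by (simp add: ac_simps)
qed

lemma codendriform_prec_prec_basis:
  assumes "packed k M" "M \<noteq> []"
  shows "tensor_I Delta_prec (Delta_prec_b M) = I_tensor Delta_bar (Delta_prec_b M)"
  unfolding Delta_prec_b_eq tensor_I_Delta_when[OF assms(1) Delta_prec_F]
    I_tensor_Delta_when[OF assms(1) Delta_bar_F[of k], simplified]
  by (intro sum.cong refl) (use prec_prec_last_row[OF assms] in \<open>auto simp: double_cuts_def\<close>)

lemma codendriform_succ_prec_basis:
  assumes "packed k M" "M \<noteq> []"
  shows "tensor_I Delta_succ (Delta_prec_b M) = I_tensor Delta_prec (Delta_succ_b M)"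
  unfolding Delta_prec_b_eq Delta_succ_b_eq tensor_I_Delta_when[OF assms(1) Delta_succ_F]
    I_tensor_Delta_when[OF assms(1) Delta_prec_F]
  by (intro sum.cong refl) (use succ_prec_last_row[OF assms] in \<open>auto simp: double_cuts_def\<close>)

lemma codendriform_succ_succ_basis:
  assumes "packed k M" "M \<noteq> []"
  shows "tensor_I Delta_bar (Delta_succ_b M) = I_tensor Delta_succ (Delta_succ_b M)"
  unfolding Delta_succ_b_eq tensor_I_Delta_when[OF assms(1) Delta_bar_F[of k], simplified]
    I_tensor_Delta_when[OF assms(1) Delta_succ_F]
  by (intro sum.cong refl) (use succ_succ_last_row[OF assms] in \<open>auto simp: double_cuts_def\<close>)

theorem proposition2p8:
  fixes k :: nat and x :: "mat \<Rightarrow>\<^sub>0 'a::field"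
  assumes "k \<ge> 1" and "x \<in> PMplus k"
  shows "Delta x = tens (F []) x + Delta_prec x + Delta_succ x + tens x (F [])
       \<and> tensor_I Delta_prec (Delta_prec x) = I_tensor Delta_bar (Delta_prec x)
       \<and> tensor_I Delta_succ (Delta_prec x) = I_tensor Delta_prec (Delta_succ x)
       \<and> tensor_I Delta_bar (Delta_succ x) = I_tensor Delta_succ (Delta_succ x)"
proof -
  have keys: "packed k M" "M \<noteq> []" if "M \<in> Poly_Mapping.keys x" for M
    using assms(2) that by (auto simp: PMplus_def)
  have "Delta x = lext (\<lambda>M. F2 [] M + Delta_prec_b M + Delta_succ_b M + F2 M []) x"
    unfolding Delta_def by (rule lext_cong) (rule Delta_b_split[OF keys])
  then have "Delta x = tens (F []) x + Delta_prec x + Delta_succ x + tens x (F [])"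
    by (simp only: lext_fun_add tens_F_Nil_left tens_F_Nil_right Delta_prec_apply Delta_succ_apply)
  moreover have "tensor_I Delta_prec (Delta_prec x) = I_tensor Delta_bar (Delta_prec x)"
    unfolding Delta_prec_apply[of x]
    by (rule tensor_I_lext_eq_I_tensor_lext) (rule codendriform_prec_prec_basis[OF keys])
  moreover have "tensor_I Delta_succ (Delta_prec x) = I_tensor Delta_prec (Delta_succ x)"
    unfolding Delta_prec_apply[of x] Delta_succ_apply[of x]
    by (rule tensor_I_lext_eq_I_tensor_lext) (rule codendriform_succ_prec_basis[OF keys])
  moreover have "tensor_I Delta_bar (Delta_succ x) = I_tensor Delta_succ (Delta_succ x)"
    unfolding Delta_succ_apply[of x]
    by (rule tensor_I_lext_eq_I_tensor_lext) (rule codendriform_succ_succ_basis[OF keys])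
  ultimately show ?thesis by blast
qed

end
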